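(* Let $a,b,c \geq 0$ be integers and $k = a + 2b + 3c$ (so $E_2^aE_4^bE_6^c$ has weight $2k$). Define $s_{a,b,c}(n)$ by $\sum_{n\geq 0} s_{a,b,c}(n) q^n = E_2^a E_4^b E_6^c$. Then for all integers $n \geq 1$, $$|s_{a,b,c}(n)| \leq 109 \cdot 2^{2k-1} n^{2k-1} (1+\log(n))^k.$$
   Context: $E_2 = 1 - 24\sum_{n\geq1}\sigma_1(n)q^n$, $E_4 = 1 + 240\sum_{n \geq 1}\sigma_3(n)q^n$, $E_6 = 1 - 504\sum_{n\geq1}\sigma_5(n)q^n$, where $\sigma_\ell(n) = \sum_{d \mid n} d^\ell$, regarded as formal power series in $q$. *)

theory Defs
  imports "HOL-Analysis.Analysis" "HOL-Computational_Algebra.Formal_Power_Series"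
begin

definition sigma :: "nat \<Rightarrow> nat \<Rightarrow> int" where
  "sigma l n = (\<Sum>d | d dvd n. int d ^ l)"

definition E2 :: "int fps" where
  "E2 = Abs_fps (\<lambda>n. if n = 0 then 1 else -24 * sigma 1 n)"

definition E4 :: "int fps" where
  "E4 = Abs_fps (\<lambda>n. if n = 0 then 1 else 240 * sigma 3 n)"

definition E6 :: "int fps" where
  "E6 = Abs_fps (\<lambda>n. if n = 0 then 1 else -504 * sigma 5 n)"

definition s_coeff :: "nat \<Rightarrow> nat \<Rightarrow> nat \<Rightarrow> nat \<Rightarrow> int" where
  "s_coeff a b c n = fps_nth (E2 ^ a * E4 ^ b * E6 ^ c) n"

end

theory Submission
  imports Defs "HOL-Computational_Algebra.Polynomial_FPS"
begin

text \<open>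
  Let \<open>T = q/(1-q)^2 = \<Sum>m. m q^m\<close> and \<open>L = 1 + log N\<close>. For \<open>1 \<le> m \<le> N\<close> one has
  \<open>\<sigma>_{2w-1}(m) \<le> m^{2w-2} \<sigma>_1(m) \<le> N^{2w-2} m L\<close>, so up to degree \<open>N\<close> the series \<open>E_2\<close>,
  \<open>E_4\<close>, \<open>E_6\<close> are coefficientwise majorised by \<open>1 + \<alpha> T\<close> with \<open>\<alpha> = 24 L\<close>, \<open>240 N^2 L\<close>,
  \<open>504 N^4 L\<close>. Hence \<open>|s(N)|\<close> is at most the \<open>N\<close>-th coefficient of \<open>P(T)\<close>, where \<open>P\<close> is a
  product of linear polynomials with nonnegative coefficients. Since
  \<open>[q^N] T^s = C(N+s-1, 2s-1) \<le> (24/N) (N^2/12)^s\<close>, that coefficient is at most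
  \<open>(24/N) P(N^2/12)\<close>, and for \<open>N \<ge> 2\<close> each linear factor of weight \<open>w\<close> contributes at most
  \<open>(4 N^2 L)^w\<close>. The case \<open>N = 1\<close> follows from \<open>s(1) = -24a + 240b - 504c\<close>.
\<close>

lemma sum_choose_shift:
  assumes "r \<le> m"
  shows "(\<Sum>j\<le>N. (j + r) choose m) = (N + r + 1) choose Suc m"
proof (induction N)
  case 0
  show ?case using assms by (cases "r = m") (simp_all add: binomial_eq_0)
next
  case (Suc N)
  then show ?case by simp
qed

lemma sum_choose_shift_weighted:
  assumes "r \<le> m"
  shows "(\<Sum>j\<le>N. ((j + r) choose m) * (N - j)) = (N + r + 1) choose (m + 2)"
proof (induction N)
  case 0
  show ?case using assms by (simp add: binomial_eq_0)
next
  case (Suc N)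
  have "(\<Sum>j\<le>Suc N. ((j + r) choose m) * (Suc N - j))
      = (\<Sum>j\<le>N. ((j + r) choose m) * (N - j) + ((j + r) choose m))"
    by (simp add: Suc_diff_le algebra_simps)
  also have "\<dots> = ((N + r + 1) choose (m + 2)) + ((N + r + 1) choose Suc m)"
    by (simp only: sum.distrib Suc.IH sum_choose_shift[OF assms])
  finally show ?case by (simp add: numeral_2_eq_2)
qed

lemma choose_times_fact_le:
  "((N + r) choose (2 * r + 1)) * fact (2 * r + 1) \<le> (N :: nat) ^ (2 * r + 1)"
proof (induction r)
  case 0
  then show ?case by simp
next
  case (Suc r)
  define n where "n = N + r"
  define k where "k = 2 * r + 1"
  have choose_step: "(Suc n choose Suc (Suc k)) * (Suc (Suc k) * Suc k) = (n choose k) * (Suc n * (n - k))"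
  proof -
    have "(Suc n choose Suc (Suc k)) * (Suc (Suc k) * Suc k) = Suc n * (Suc k * (n choose Suc k))"
      using Suc_times_binomial[of "Suc k" n] by (simp only: ac_simps)
    also have "\<dots> = Suc n * ((n - k) * (n choose k))"
      by (simp only: binomial_absorption binomial_absorb_comp)
    finally show ?thesis by (simp only: ac_simps)
  qed
  have fact_step: "fact (Suc (Suc k)) = Suc (Suc k) * Suc k * (fact k :: nat)"
    by (simp add: fact_Suc algebra_simps)
  have "Suc n * (n - k) \<le> N * N"
  proof (cases "r < N")
    case True
    then obtain t where "N = Suc r + t" using less_iff_Suc_add by auto
    then show ?thesis unfolding n_def k_def by (simp add: algebra_simps)
  qed (simp add: n_def k_def)
  with Suc.IH have "(n choose k) * fact k * (Suc n * (n - k)) \<le> N ^ k * (N * N)"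
    unfolding n_def k_def by (rule mult_le_mono)
  moreover have "(Suc n choose Suc (Suc k)) * fact (Suc (Suc k)) = (n choose k) * fact k * (Suc n * (n - k))"
    using choose_step fact_step by (metis mult.assoc mult.commute)
  ultimately have "(Suc n choose Suc (Suc k)) * fact (Suc (Suc k)) \<le> N ^ Suc (Suc k)"
    by (simp add: ac_simps)
  moreover have "N + Suc r = Suc n" "2 * Suc r + 1 = Suc (Suc k)"
    unfolding n_def k_def by simp_all
  ultimately show ?case by simp
qed

lemma twelve_power_le_fact: "(12 :: nat) ^ Suc r \<le> 24 * fact (2 * r + 1)"
proof (induction r)
  case 0
  then show ?case by simp
next
  case (Suc r)
  show ?case
  proof (cases "r = 0")
    case True
    then show ?thesis by (simp add: fact_Suc numeral_3_eq_3)
  next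
    case False
    then have "12 \<le> (2 * r + 3) * (2 * r + 2)"
      by (cases r) auto
    then have "12 * 12 ^ Suc r \<le> (2 * r + 3) * (2 * r + 2) * (24 * fact (2 * r + 1))"
      using Suc.IH by (rule mult_le_mono)
    moreover have "fact (2 * Suc r + 1) = (2 * r + 3) * (2 * r + 2) * (fact (2 * r + 1) :: nat)"
      by (simp add: fact_Suc algebra_simps)
    ultimately show ?thesis
      by (simp only: power_Suc[of 12 "Suc r"] ac_simps)
  qed
qed

lemma coeff_nonneg_mult:
  fixes p q :: "'a :: linordered_semidom poly"
  assumes "\<forall>i. 0 \<le> coeff p i" and "\<forall>i. 0 \<le> coeff q i"
  shows "\<forall>i. 0 \<le> coeff (p * q) i"
  using assms by (auto simp: coeff_mult intro!: sum_nonneg)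

lemma coeff_nonneg_power:
  fixes p :: "'a :: linordered_semidom poly"
  assumes "\<forall>i. 0 \<le> coeff p i"
  shows "\<forall>i. 0 \<le> coeff (p ^ n) i"
  by (induction n) (simp_all add: coeff_1 coeff_nonneg_mult assms)

definition fps_nat_seq :: "real fps" where
  "fps_nat_seq = Abs_fps of_nat"

lemma fps_nat_seq_nth_0 [simp]: "fps_nth fps_nat_seq 0 = 0"
  by (simp add: fps_nat_seq_def)

lemma fps_nat_seq_power_nth: "fps_nth (fps_nat_seq ^ Suc r) N = real ((N + r) choose (2 * r + 1))"
proof (induction r arbitrary: N)
  case 0
  then show ?case by (simp add: fps_nat_seq_def)
next
  case (Suc r)
  have "fps_nth (fps_nat_seq ^ Suc (Suc r)) N = (\<Sum>j=0..N. real ((j + r) choose (2 * r + 1)) * real (N - j))"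
    by (simp only: power_Suc2[of fps_nat_seq "Suc r"] fps_mult_nth Suc.IH) (simp add: fps_nat_seq_def)
  also have "\<dots> = real (\<Sum>j\<le>N. ((j + r) choose (2 * r + 1)) * (N - j))"
    by (simp add: atLeast0AtMost)
  also have "\<dots> = real ((N + Suc r) choose (2 * Suc r + 1))"
    by (simp only: sum_choose_shift_weighted[of r "2 * r + 1"]) (simp add: numeral_3_eq_3)
  finally show ?case .
qed

lemma fps_nat_seq_power_nth_le:
  assumes "N \<ge> 1"
  shows "fps_nth (fps_nat_seq ^ s) N \<le> 24 / real N * (real N ^ 2 / 12) ^ s"
proof (cases s)
  case 0
  then show ?thesis using assms by simp
next
  case (Suc r)
  have "real (((N + r) choose (2 * r + 1)) * fact (2 * r + 1)) \<le> real (N ^ (2 * r + 1))"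
    using choose_times_fact_le by (simp only: of_nat_le_iff)
  then have choose_le: "real ((N + r) choose (2 * r + 1)) * fact (2 * r + 1) \<le> real N ^ (2 * r + 1)"
    by (simp only: of_nat_mult of_nat_fact of_nat_power)
  have "real (12 ^ Suc r) \<le> real (24 * fact (2 * r + 1))"
    using twelve_power_le_fact by (simp only: of_nat_le_iff)
  then have twelve_le: "12 ^ Suc r \<le> 24 * (fact (2 * r + 1) :: real)"
    by (simp only: of_nat_mult of_nat_fact of_nat_power of_nat_numeral)
  have "fps_nth (fps_nat_seq ^ s) N = real ((N + r) choose (2 * r + 1))"
    by (simp only: Suc fps_nat_seq_power_nth)
  also have "\<dots> \<le> real N ^ (2 * r + 1) / fact (2 * r + 1)"
    using choose_le by (simp add: pos_le_divide_eq)
  also have "\<dots> = real N ^ (2 * r + 1) * 24 / (24 * fact (2 * r + 1))"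
    by simp
  also have "\<dots> \<le> real N ^ (2 * r + 1) * 24 / 12 ^ Suc r"
    using twelve_le by (intro divide_left_mono) auto
  also have "\<dots> = 24 / real N * (real N ^ 2 / 12) ^ s"
  proof -
    have "(real N ^ 2) ^ Suc r = real N * real N ^ (2 * r + 1)"
      by (simp flip: power_mult power_Suc)
    then show ?thesis
      using assms Suc by (simp add: power_divide)
  qed
  finally show ?thesis .
qed

lemma fps_compose_nat_seq_nth_le:
  assumes "N \<ge> 1" and coeff_nonneg: "\<forall>i. 0 \<le> coeff P i"
  shows "fps_nth (fps_of_poly P oo fps_nat_seq) N \<le> 24 / real N * poly P (real N ^ 2 / 12)"
proof -
  define x where "x = real N ^ 2 / 12"
  have "(\<Sum>i=0..N. coeff P i * x ^ i) \<le> (\<Sum>i\<in>{0..N} \<union> {..degree P}. coeff P i * x ^ i)"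
    using coeff_nonneg by (intro sum_mono2) (auto simp: x_def)
  also have "\<dots> = poly P x"
    by (auto simp: poly_altdef le_degree intro!: sum.mono_neutral_right)
  finally have partial_sum_le: "(\<Sum>i=0..N. coeff P i * x ^ i) \<le> poly P x" .
  have "fps_nth (fps_of_poly P oo fps_nat_seq) N = (\<Sum>i=0..N. coeff P i * fps_nth (fps_nat_seq ^ i) N)"
    by (simp add: fps_compose_nth)
  also have "\<dots> \<le> (\<Sum>i=0..N. coeff P i * (24 / real N * x ^ i))"
    using fps_nat_seq_power_nth_le[OF assms(1)] coeff_nonneg unfolding x_def
    by (intro sum_mono mult_left_mono) auto
  also have "\<dots> = 24 / real N * (\<Sum>i=0..N. coeff P i * x ^ i)"
    by (simp add: sum_distrib_left ac_simps)
  also have "\<dots> \<le> 24 / real N * poly P x"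
    using partial_sum_le by (simp add: divide_right_mono)
  finally show ?thesis
    by (simp add: x_def)
qed

lemma fps_compose_nat_seq_linear:
  "fps_of_poly [:1, c:] oo fps_nat_seq = 1 + fps_const c * fps_nat_seq"
  by (simp add: fps_of_poly_linear' fps_compose_add_distrib fps_compose_mult_distrib)

definition fps_majorant_upto :: "nat \<Rightarrow> int fps \<Rightarrow> real fps \<Rightarrow> bool" where
  "fps_majorant_upto N f F \<longleftrightarrow> (\<forall>m\<le>N. \<bar>real_of_int (fps_nth f m)\<bar> \<le> fps_nth F m)"

lemma fps_majorant_upto_one: "fps_majorant_upto N 1 1"
  by (simp add: fps_majorant_upto_def)

lemma fps_majorant_upto_mult:
  assumes f: "fps_majorant_upto N f F" and g: "fps_majorant_upto N g G"
  shows "fps_majorant_upto N (f * g) (F * G)"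
  unfolding fps_majorant_upto_def
proof (intro allI impI)
  fix m
  assume "m \<le> N"
  then have bounds: "\<bar>real_of_int (fps_nth f i)\<bar> \<le> fps_nth F i"
      "\<bar>real_of_int (fps_nth g (m - i))\<bar> \<le> fps_nth G (m - i)" if "i \<le> m" for i
    using f g that by (auto simp: fps_majorant_upto_def)
  have "\<bar>real_of_int (fps_nth (f * g) m)\<bar>
      = \<bar>\<Sum>i=0..m. real_of_int (fps_nth f i) * real_of_int (fps_nth g (m - i))\<bar>"
    by (simp add: fps_mult_nth)
  also have "\<dots> \<le> (\<Sum>i=0..m. \<bar>real_of_int (fps_nth f i)\<bar> * \<bar>real_of_int (fps_nth g (m - i))\<bar>)"
    by (rule order_trans[OF sum_abs]) (simp add: abs_mult)
  also have "\<dots> \<le> (\<Sum>i=0..m. fps_nth F i * fps_nth G (m - i))"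
    using bounds by (intro sum_mono mult_mono) force+
  also have "\<dots> = fps_nth (F * G) m"
    by (simp add: fps_mult_nth)
  finally show "\<bar>real_of_int (fps_nth (f * g) m)\<bar> \<le> fps_nth (F * G) m" .
qed

lemma fps_majorant_upto_power:
  "fps_majorant_upto N f F \<Longrightarrow> fps_majorant_upto N (f ^ n) (F ^ n)"
  by (induction n) (simp_all add: fps_majorant_upto_one fps_majorant_upto_mult)

lemma harm_le_one_plus_ln:
  assumes "n > 0"
  shows "harm n \<le> 1 + ln (real n)"
proof -
  obtain k where k: "n = Suc k"
    using assms gr0_implies_Suc by blast
  have "harm (Suc k) - ln (real (Suc k)) \<le> harm (Suc 0) - ln (real (Suc 0))"
    using decseqD[OF decseq_harm_diff_ln, of 0 k] by simp
  then show ?thesis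
    using k by (simp add: harm_def)
qed

lemma sigma_nonneg: "sigma l m \<ge> 0"
  unfolding sigma_def by (rule sum_nonneg) simp

lemma sigma_1_le:
  assumes m: "m > 0"
  shows "real_of_int (sigma 1 m) \<le> real m * (1 + ln (real m))"
proof -
  define D where "D = {d. d dvd m}"
  have "real_of_int (sigma 1 m) = (\<Sum>d\<in>D. real d)"
    by (simp add: sigma_def D_def)
  also have "\<dots> = (\<Sum>d\<in>D. real (m div d))"
    by (rule sum.reindex_bij_witness[of D "\<lambda>d. m div d" "\<lambda>d. m div d"])
      (use m in \<open>auto simp: D_def elim!: dvdE\<close>)
  also have "\<dots> = (\<Sum>d\<in>D. real m / real d)"
    by (rule sum.cong) (auto simp: D_def real_of_nat_div)
  also have "\<dots> \<le> (\<Sum>d\<in>{1..m}. real m / real d)"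
    using m by (intro sum_mono2) (auto simp: D_def dvd_imp_le Suc_le_eq dvd_pos_nat)
  also have "\<dots> = real m * harm m"
    by (simp add: harm_def sum_distrib_left field_simps)
  also have "\<dots> \<le> real m * (1 + ln (real m))"
    using harm_le_one_plus_ln[OF m] by (simp add: mult_left_mono)
  finally show ?thesis .
qed

lemma sigma_Suc_le:
  assumes "m > 0"
  shows "sigma (Suc l) m \<le> int m ^ l * sigma 1 m"
  unfolding sigma_def sum_distrib_left
proof (rule sum_mono)
  fix d
  assume "d \<in> {d. d dvd m}"
  then have "d \<le> m"
    using assms by (simp add: dvd_imp_le)
  then have "int d ^ l \<le> int m ^ l"
    by (simp add: power_mono)
  then show "int d ^ Suc l \<le> int m ^ l * int d ^ 1"
    by (simp add: mult_left_mono mult.commute[of "int m ^ l"])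
qed

lemma fps_majorant_upto_divisor_series:
  fixes f :: "int fps" and C :: int
  assumes N: "N \<ge> 1" and f0: "fps_nth f 0 = 1"
    and f_nth: "\<And>m. m \<ge> 1 \<Longrightarrow> fps_nth f m = C * sigma (Suc l) m"
  shows "fps_majorant_upto N f (1 + fps_const (\<bar>C\<bar> * real N ^ l * (1 + ln (real N))) * fps_nat_seq)"
  unfolding fps_majorant_upto_def
proof (intro allI impI)
  fix m
  assume "m \<le> N"
  show "\<bar>real_of_int (fps_nth f m)\<bar>
      \<le> fps_nth (1 + fps_const (\<bar>C\<bar> * real N ^ l * (1 + ln (real N))) * fps_nat_seq) m"
  proof (cases "m = 0")
    case True
    then show ?thesis using f0 by simp
  next
    case False
    then have m: "m > 0" by simp
    have "real_of_int (sigma (Suc l) m) \<le> real m ^ l * real_of_int (sigma 1 m)"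
      using sigma_Suc_le[OF m, of l] by (metis of_int_le_iff of_int_mult of_int_of_nat_eq of_int_power)
    also have "\<dots> \<le> real m ^ l * (real m * (1 + ln (real m)))"
      using sigma_1_le[OF m] by (simp add: mult_left_mono)
    also have "\<dots> \<le> real N ^ l * (real m * (1 + ln (real N)))"
      using \<open>m \<le> N\<close> m by (intro mult_mono power_mono) auto
    finally have sigma_le: "real_of_int (sigma (Suc l) m) \<le> real N ^ l * (real m * (1 + ln (real N)))" .
    have "\<bar>real_of_int (fps_nth f m)\<bar> = \<bar>real_of_int C\<bar> * real_of_int (sigma (Suc l) m)"
      using f_nth[of m] m sigma_nonneg[of "Suc l" m] by (simp add: abs_mult)
    also have "\<dots> \<le> \<bar>real_of_int C\<bar> * (real N ^ l * (real m * (1 + ln (real N))))"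
      using sigma_le by (simp add: mult_left_mono)
    also have "\<dots> = fps_nth (1 + fps_const (\<bar>C\<bar> * real N ^ l * (1 + ln (real N))) * fps_nat_seq) m"
      using False by (simp add: fps_nat_seq_def)
    finally show ?thesis .
  qed
qed

lemma E2_nth: "fps_nth E2 0 = 1" "m \<ge> 1 \<Longrightarrow> fps_nth E2 m = -24 * sigma (Suc 0) m"
  by (auto simp: E2_def)

lemma E4_nth: "fps_nth E4 0 = 1" "m \<ge> 1 \<Longrightarrow> fps_nth E4 m = 240 * sigma (Suc 2) m"
  by (auto simp: E4_def)

lemma E6_nth: "fps_nth E6 0 = 1" "m \<ge> 1 \<Longrightarrow> fps_nth E6 m = -504 * sigma (Suc 4) m"
  by (auto simp: E6_def)

lemma s_coeff_1: "s_coeff a b c 1 = - 24 * int a + 240 * int b - 504 * int c"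
proof -
  have "sigma l 1 = 1" for l
    by (simp add: sigma_def)
  then have "fps_nth (E2 ^ a) 1 = - 24 * int a" "fps_nth (E4 ^ b) 1 = 240 * int b"
      "fps_nth (E6 ^ c) 1 = - 504 * int c"
    using fps_power_first_eq[OF E2_nth(1), of a] fps_power_first_eq[OF E4_nth(1), of b]
      fps_power_first_eq[OF E6_nth(1), of c]
    by (simp_all add: E2_def E4_def E6_def)
  then show ?thesis
    by (simp add: s_coeff_def fps_mult_nth_1 fps_power_zeroth E2_nth E4_nth E6_nth)
qed

text \<open>Here \<open>y\<close> stands for \<open>N^2\<close> and \<open>L\<close> for \<open>1 + ln N\<close>. The second bound fails for \<open>y = 1\<close>,
  which is why \<open>s(1)\<close> is bounded directly.\<close>

lemma eisenstein_factor_bounds: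
  fixes y L :: real
  assumes y: "y \<ge> 4" and L: "L \<ge> 5 / 3"
  shows "1 + 24 * L * (y / 12) \<le> 4 * y * L"
    and "1 + 240 * y * L * (y / 12) \<le> (4 * y * L) ^ 2"
    and "1 + 504 * y ^ 2 * L * (y / 12) \<le> (4 * y * L) ^ 3"
proof -
  have "4 * (5 / 3) \<le> y * L"
    using y L by (intro mult_mono) auto
  then have yL: "y * L \<ge> 1" by simp
  have "4 * 1 \<le> y * (y * L)"
    using y yL by (intro mult_mono) auto
  then have yyL: "y * y * L \<ge> 1" by (simp add: mult.assoc)
  have "4 * 1 \<le> y * (y * y * L)"
    using y yyL by (intro mult_mono) auto
  then have yyyL: "y * y * y * L \<ge> 1" by (simp add: mult.assoc)
  show "1 + 24 * L * (y / 12) \<le> 4 * y * L"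
    using yL by (simp add: mult.commute)
  have "y * y * L * 1 \<le> y * y * L * (16 * L - 20)"
    using yyL L by (intro mult_left_mono) auto
  then show "1 + 240 * y * L * (y / 12) \<le> (4 * y * L) ^ 2"
    using yyL by (simp add: power2_eq_square algebra_simps)
  have "(5 / 3) * (5 / 3) \<le> L * L"
    using L by (intro mult_mono) auto
  then have "y * y * y * L * 1 \<le> y * y * y * L * (64 * L * L - 42)"
    using yyyL by (intro mult_left_mono) auto
  then show "1 + 504 * y ^ 2 * L * (y / 12) \<le> (4 * y * L) ^ 3"
    using yyyL by (simp add: power2_eq_square power3_eq_cube algebra_simps)
qed

lemma abs_s_coeff_1_le:
  assumes k: "k = a + 2 * b + 3 * c"
  shows "\<bar>real_of_int (s_coeff a b c 1)\<bar> \<le> 109 * 2 ^ (2 * k - 1)"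
proof -
  have "\<bar>real_of_int (s_coeff a b c 1)\<bar> \<le> 24 * real a + 240 * real b + 504 * real c"
    unfolding s_coeff_1 by simp
  also have "\<dots> \<le> 109 * (2 * real k)"
    using k by simp
  also have "\<dots> \<le> 109 * 2 ^ (2 * k - 1)"
  proof -
    have "2 * k \<le> 2 ^ (2 * k - 1)"
      using less_exp[of "2 * k - 1"] by (cases k) auto
    then have "2 * real k \<le> 2 ^ (2 * k - 1)"
      by (metis of_nat_le_iff of_nat_mult of_nat_numeral of_nat_power)
    then show ?thesis by simp
  qed
  finally show ?thesis .
qed

definition majorant_poly :: "nat \<Rightarrow> nat \<Rightarrow> nat \<Rightarrow> nat \<Rightarrow> real poly" where
  "majorant_poly N a b c =
     [:1, 24 * (1 + ln (real N)):] ^ a * [:1, 240 * real N ^ 2 * (1 + ln (real N)):] ^ b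
       * [:1, 504 * real N ^ 4 * (1 + ln (real N)):] ^ c"

lemma fps_majorant_upto_s_coeff_series:
  assumes N: "N \<ge> 1"
  shows "fps_majorant_upto N (E2 ^ a * E4 ^ b * E6 ^ c) (fps_of_poly (majorant_poly N a b c) oo fps_nat_seq)"
proof -
  define L where "L = 1 + ln (real N)"
  have "fps_majorant_upto N E2 (1 + fps_const (24 * L) * fps_nat_seq)"
    using fps_majorant_upto_divisor_series[OF N, of E2 "-24" 0] E2_nth by (simp add: L_def)
  moreover have "fps_majorant_upto N E4 (1 + fps_const (240 * real N ^ 2 * L) * fps_nat_seq)"
    using fps_majorant_upto_divisor_series[OF N, of E4 240 2] E4_nth by (simp add: L_def)
  moreover have "fps_majorant_upto N E6 (1 + fps_const (504 * real N ^ 4 * L) * fps_nat_seq)"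
    using fps_majorant_upto_divisor_series[OF N, of E6 "-504" 4] E6_nth by (simp add: L_def)
  moreover have "fps_of_poly (majorant_poly N a b c) oo fps_nat_seq
      = (1 + fps_const (24 * L) * fps_nat_seq) ^ a * (1 + fps_const (240 * real N ^ 2 * L) * fps_nat_seq) ^ b
        * (1 + fps_const (504 * real N ^ 4 * L) * fps_nat_seq) ^ c"
    by (simp add: majorant_poly_def L_def fps_of_poly_mult fps_of_poly_power fps_compose_mult_distrib
        fps_compose_nat_seq_linear flip: fps_compose_power)
  ultimately show ?thesis
    by (simp add: fps_majorant_upto_mult fps_majorant_upto_power)
qed

lemma coeff_majorant_poly_nonneg:
  assumes "N \<ge> 1"
  shows "\<forall>i. 0 \<le> coeff (majorant_poly N a b c) i"
proof -
  have "\<forall>i. 0 \<le> coeff [:1, \<alpha>:] i" if "\<alpha> \<ge> 0" for \<alpha> :: real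
    using that by (simp add: coeff_pCons split: nat.split)
  moreover have "0 \<le> 1 + ln (real N)"
    using assms by simp
  ultimately show ?thesis
    unfolding majorant_poly_def by (intro coeff_nonneg_mult coeff_nonneg_power) auto
qed

lemma poly_majorant_poly_le:
  assumes N: "N \<ge> 2"
  shows "poly (majorant_poly N a b c) (real N ^ 2 / 12)
    \<le> (4 * real N ^ 2 * (1 + ln (real N))) ^ (a + 2 * b + 3 * c)"
proof -
  define L where "L = 1 + ln (real N)"
  define x where "x = real N ^ 2 / 12"
  define u where "u = 4 * real N ^ 2 * L"
  have "ln 2 \<le> ln (real N)"
    using N by simp
  then have L: "L \<ge> 5 / 3"
    using ln2_ge_two_thirds unfolding L_def by simp
  have "real N ^ 2 \<ge> 2 ^ 2"
    using N by (intro power_mono) auto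
  note factor_bounds = eisenstein_factor_bounds[of "real N ^ 2" L, folded x_def u_def]
  have "(1 + 24 * L * x) ^ a \<le> u ^ a" "(1 + 240 * real N ^ 2 * L * x) ^ b \<le> (u ^ 2) ^ b"
      "(1 + 504 * real N ^ 4 * L * x) ^ c \<le> (u ^ 3) ^ c"
    using factor_bounds L \<open>real N ^ 2 \<ge> 2 ^ 2\<close>
    by (auto simp: x_def power_mult_distrib[symmetric] intro!: power_mono)
  moreover have "0 \<le> 1 + 240 * real N ^ 2 * L * x" "0 \<le> 1 + 504 * real N ^ 4 * L * x" "0 \<le> u"
    using L by (simp_all add: x_def u_def)
  ultimately have factors_le: "(1 + 24 * L * x) ^ a * (1 + 240 * real N ^ 2 * L * x) ^ b
      * (1 + 504 * real N ^ 4 * L * x) ^ c \<le> u ^ a * (u ^ 2) ^ b * (u ^ 3) ^ c"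
    by (intro mult_mono) simp_all
  have "poly (majorant_poly N a b c) x
      = (1 + 24 * L * x) ^ a * (1 + 240 * real N ^ 2 * L * x) ^ b * (1 + 504 * real N ^ 4 * L * x) ^ c"
    by (simp add: majorant_poly_def L_def algebra_simps)
  also have "\<dots> \<le> u ^ (a + 2 * b + 3 * c)"
    using factors_le by (simp add: power_add power_mult)
  finally show ?thesis
    by (simp add: x_def u_def L_def)
qed

lemma scaled_power_le:
  fixes N k :: nat and L :: real
  assumes N: "N \<ge> 1" and L: "L \<ge> 0"
  shows "24 / real N * (4 * real N ^ 2 * L) ^ k \<le> 109 * 2 ^ (2 * k - 1) * real N ^ (2 * k - 1) * L ^ k"
proof (cases k)
  case 0
  then show ?thesis using N by (simp add: field_simps)
next
  case (Suc j)
  have "(4 :: real) ^ k = 2 ^ (2 * k)"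
    by (simp add: power_mult)
  then have "(4 * real N ^ 2 * L) ^ k = 2 * 2 ^ (2 * k - 1) * (real N * real N ^ (2 * k - 1)) * L ^ k"
    by (simp add: Suc power_mult_distrib flip: power_mult power_Suc)
  then have "24 / real N * (4 * real N ^ 2 * L) ^ k = 48 * 2 ^ (2 * k - 1) * real N ^ (2 * k - 1) * L ^ k"
    using N by simp
  also have "\<dots> \<le> 109 * 2 ^ (2 * k - 1) * real N ^ (2 * k - 1) * L ^ k"
    using L by (intro mult_right_mono) auto
  finally show ?thesis .
qed

theorem lemma3p2:
  fixes a b c k n :: nat
  assumes "k = a + 2 * b + 3 * c" and "n \<ge> 1"
  shows "\<bar>real_of_int (s_coeff a b c n)\<bar>
           \<le> 109 * 2 ^ (2 * k - 1) * real n ^ (2 * k - 1) * (1 + ln (real n)) ^ k"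
proof (cases "n = 1")
  case True
  then show ?thesis
    using abs_s_coeff_1_le[OF assms(1)] by simp
next
  case False
  then have "n \<ge> 2"
    using assms(2) by simp
  have "\<bar>real_of_int (s_coeff a b c n)\<bar> \<le> fps_nth (fps_of_poly (majorant_poly n a b c) oo fps_nat_seq) n"
    using fps_majorant_upto_s_coeff_series[OF assms(2)] by (simp add: fps_majorant_upto_def s_coeff_def)
  also have "\<dots> \<le> 24 / real n * poly (majorant_poly n a b c) (real n ^ 2 / 12)"
    using assms(2) coeff_majorant_poly_nonneg[OF assms(2)] by (rule fps_compose_nat_seq_nth_le)
  also have "\<dots> \<le> 24 / real n * (4 * real n ^ 2 * (1 + ln (real n))) ^ k"
    using poly_majorant_poly_le[OF \<open>n \<ge> 2\<close>, of a b c] assms(1) by (intro mult_left_mono) simp_all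
  also have "\<dots> \<le> 109 * 2 ^ (2 * k - 1) * real n ^ (2 * k - 1) * (1 + ln (real n)) ^ k"
    using assms(2) by (intro scaled_power_le) simp_all
  finally show ?thesis .
qed

end
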